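(* Suppose Assumption 4.1 holds, and that $\sum_{n=1}^\infty p_n<\infty$ and $\lim_{n\to\infty}\mu_n=0$. Then the sequence $\{x_n\}$ generated by Algorithm 3.1 converges linearly to some point of $\Omega$; that is, there exist $p\in\Omega$, $q\in(0,1)$ and $K\ge0$ such that $\|x_n-p\|^2\le K q^{n}$ for all $n$.
   Context: Let $H$ be a real Hilbert space, $A:H\to H$ a single-valued mapping and $B:H\to 2^H$ a set-valued mapping, and let $\Omega:=(A+B)^{-1}(0)=\{x\in H:\ 0\in Ax+Bx\}$. Algorithm 3.1 is the following iteration. Fix $x_0,x_1\in H$, $\mu\in(0,1)$, $\lambda_1>0$, real sequences $\{\alpha_n\},\{\beta_n\},\{\theta_n\}$ and nonnegative real sequences $\{\mu_n\},\{p_n\}$. For $n=1,2,\dots$ compute $w_n=x_n+\alpha_n(x_n-x_{n-1})$, $z_n=x_n+\beta_n(x_n-x_{n-1})$, $y_n=(I+\lambda_nB)^{-1}(I-\lambda_nA)w_n$, and set $\lambda_{n+1}=\min\{(\mu_n+\mu)\|w_n-y_n\|/\|Aw_n-Ay_n\|,\ \lambda_n+p_n\}$ if $Aw_n\neq Ay_n$, and $\lambda_{n+1}=\lambda_n+p_n$ otherwise. If $w_n=y_n$ the algorithm stops (then $y_n\in\Omega$). Otherwise set $x_{n+1}=(1-\theta_n)z_n+\theta_n\big(y_n-\lambda_n(Ay_n-Aw_n)\big)$ and continue. Here $I$ is the identity and $(I+\lambda B)^{-1}$ is the resolvent of $B$. Throughout, it is assumed that the algorithm does not stop, so that infinite sequences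 $\{x_n\},\{w_n\},\{z_n\},\{y_n\},\{\lambda_n\}$ are generated. Assumption 4.1: (i) $\Omega\neq\emptyset$. (ii) Either $A$ is $L$-Lipschitz continuous and $r$-strongly monotone and $B$ is maximal monotone, or $A$ is $L$-Lipschitz continuous and monotone and $B$ is maximal monotone and $r$-strongly monotone (for some $r>0$). (iii) With $\hat\lambda:=\min\{\mu/L,\lambda_1\}$ and $\tau:=1-\frac12\min\{1-\mu,\ 2\hat\lambda r\}\in(\tfrac12,1)$, the parameters satisfy: ($c_1$) $0\le\beta_n\le\beta<\frac12\big(\frac1\tau-1\big)$; ($c_2$) $0\le\alpha_n\le\alpha<\frac{1-\tau}{\tau}$; ($c_3$) $\max\Big\{\frac{1-\beta}{1+\alpha-\beta},\ \frac{\beta}{1+\beta-\tau(1+\alpha)}\Big\}<\theta\le\theta_{n-1}\le\theta_n\le\frac{-1-\beta+\sqrt{(1+\beta)^2-4(\frac1\tau-1-2\beta)(\beta-1)}}{2(\frac1\tau-1-2\beta)}$ for all $n$, where $\alpha,\beta,\theta$ are constants. A set-valued $B$ is $r$-strongly monotone if $\langle u-v,x-y\rangle\ge r\|x-y\|^2$ whenever $u\in Bx$, $v\in By$; a single-valued $A$ is $r$-strongly monotone if $\langle Ax-Ay,x-y\rangle\ge r\|x-y\|^2$ for all $x,y$. *)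

theory Defs
  imports "HOL-Analysis.Analysis"
begin

definition strongly_monotone_op :: "real \<Rightarrow> ('a::real_inner \<Rightarrow> 'a) \<Rightarrow> bool" where
  "strongly_monotone_op r A \<longleftrightarrow> (\<forall>x y. inner (A x - A y) (x - y) \<ge> r * (norm (x - y))\<^sup>2)"

definition monotone_op :: "('a::real_inner \<Rightarrow> 'a) \<Rightarrow> bool" where
  "monotone_op A \<longleftrightarrow> (\<forall>x y. inner (A x - A y) (x - y) \<ge> 0)"

definition monotone_setop :: "('a::real_inner \<Rightarrow> 'a set) \<Rightarrow> bool" where
  "monotone_setop B \<longleftrightarrow> (\<forall>x y u v. u \<in> B x \<longrightarrow> v \<in> B y \<longrightarrow> inner (u - v) (x - y) \<ge> 0)"

definition maximal_monotone :: "('a::real_inner \<Rightarrow> 'a set) \<Rightarrow> bool" where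
  "maximal_monotone B \<longleftrightarrow> monotone_setop B \<and>
     (\<forall>x u. (\<forall>y v. v \<in> B y \<longrightarrow> inner (u - v) (x - y) \<ge> 0) \<longrightarrow> u \<in> B x)"

definition strongly_monotone_setop :: "real \<Rightarrow> ('a::real_inner \<Rightarrow> 'a set) \<Rightarrow> bool" where
  "strongly_monotone_setop r B \<longleftrightarrow>
     (\<forall>x y u v. u \<in> B x \<longrightarrow> v \<in> B y \<longrightarrow> inner (u - v) (x - y) \<ge> r * (norm (x - y))\<^sup>2)"

definition zeros_sum :: "('a::real_vector \<Rightarrow> 'a) \<Rightarrow> ('a \<Rightarrow> 'a set) \<Rightarrow> 'a set" where
  "zeros_sum A B = {x. \<exists>u \<in> B x. A x + u = 0}"

text \<open>y = (I + lam B)^{-1} v, written relationally: v \<in> y + lam B y.\<close>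
definition is_resolvent_value :: "real \<Rightarrow> ('a::real_vector \<Rightarrow> 'a set) \<Rightarrow> 'a \<Rightarrow> 'a \<Rightarrow> bool" where
  "is_resolvent_value lam B v y \<longleftrightarrow> (\<exists>u \<in> B y. v = y + lam *\<^sub>R u)"

definition lam_hat :: "real \<Rightarrow> real \<Rightarrow> real \<Rightarrow> real" where
  "lam_hat mu L lam1 = min (mu / L) lam1"

definition tau_param :: "real \<Rightarrow> real \<Rightarrow> real \<Rightarrow> real \<Rightarrow> real" where
  "tau_param mu L lam1 r = 1 - (1/2) * min (1 - mu) (2 * lam_hat mu L lam1 * r)"

definition theta_upper :: "real \<Rightarrow> real \<Rightarrow> real" where
  "theta_upper tau beta =
     (-1 - beta + sqrt ((1 + beta)\<^sup>2 - 4 * (1/tau - 1 - 2*beta) * (beta - 1))) / (2 * (1/tau - 1 - 2*beta))"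

end

theory Submission
  imports Defs
begin

text \<open>
  Fix a zero \<open>p\<close> of \<open>A + B\<close>. The step sizes \<open>\<lambda>\<^sub>n\<close> stay above \<open>min (\<mu>/L) \<lambda>\<^sub>1\<close> and grow
  only by the summable \<open>p\<^sub>n\<close>, so they converge to a positive limit and eventually
  \<open>((\<mu>\<^sub>n + \<mu>) \<lambda>\<^sub>n / \<lambda>\<^sub>n\<^sub>+\<^sub>1)\<^sup>2 < \<mu>\<close>. From then on strong monotonicity makes the
  forward-backward-forward point \<open>v\<^sub>n = y\<^sub>n - \<lambda>\<^sub>n (A y\<^sub>n - A w\<^sub>n)\<close> satisfy
  \<open>\<parallel>v\<^sub>n - p\<parallel>\<^sup>2 \<le> \<tau> \<parallel>w\<^sub>n - p\<parallel>\<^sup>2\<close>. Expanding the inertial extrapolations and the relaxation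
  step, the Lyapunov function \<open>\<parallel>x\<^sub>n - p\<parallel>\<^sup>2 + (1 - \<theta>\<^sub>n\<^sub>-\<^sub>1)/\<theta>\<^sub>n\<^sub>-\<^sub>1 (1 - \<beta>) \<parallel>x\<^sub>n - x\<^sub>n\<^sub>-\<^sub>1\<parallel>\<^sup>2\<close>
  then contracts by a fixed factor \<open>q < 1\<close>; the bounds (c1)--(c3) are exactly what keeps the
  coefficients of both terms below \<open>q\<close>, with \<open>theta_upper\<close> the positive root of the quadratic
  governing the velocity term.
\<close>

lemma norm_diff_sq_le:
  fixes a b c :: "'a::real_normed_vector"
  shows "(norm (a - c))\<^sup>2 \<le> 2 * (norm (a - b))\<^sup>2 + 2 * (norm (b - c))\<^sup>2"
proof -
  have "norm (a - c) \<le> norm (a - b) + norm (b - c)"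
    using norm_diff_triangle_le[of a b "norm (a - b)" c "norm (b - c)"] by simp
  then have "(norm (a - c))\<^sup>2 \<le> (norm (a - b) + norm (b - c))\<^sup>2"
    by (simp add: power_mono)
  also have "\<dots> \<le> 2 * (norm (a - b))\<^sup>2 + 2 * (norm (b - c))\<^sup>2"
    using sum_squares_ge_zero[of "norm (a - b) - norm (b - c)" 0]
    by (simp add: power2_eq_square algebra_simps)
  finally show ?thesis .
qed

lemma norm_convex_combination_sq:
  fixes a b :: "'a::real_inner"
  shows "(norm ((1 - t) *\<^sub>R a + t *\<^sub>R b))\<^sup>2
    = (1 - t) * (norm a)\<^sup>2 + t * (norm b)\<^sup>2 - t * (1 - t) * (norm (a - b))\<^sup>2"
  unfolding power2_norm_eq_inner
  by (simp add: inner_add_left inner_add_right inner_diff_left inner_diff_right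
      inner_commute algebra_simps)

lemma norm_diff_scaleR_sq_ge:
  fixes a b :: "'a::real_inner"
  assumes "0 \<le> t"
  shows "(1 - t) * (norm a)\<^sup>2 + (t\<^sup>2 - t) * (norm b)\<^sup>2 \<le> (norm (a - t *\<^sub>R b))\<^sup>2"
proof -
  have expand: "(norm (a - t *\<^sub>R b))\<^sup>2 = (norm a)\<^sup>2 - 2 * t * inner a b + t\<^sup>2 * (norm b)\<^sup>2"
    unfolding power2_norm_eq_inner
    by (simp add: inner_diff_left inner_diff_right inner_commute algebra_simps power2_eq_square)
  have "0 \<le> (norm (a - b))\<^sup>2" by simp
  also have "\<dots> = (norm a)\<^sup>2 - 2 * inner a b + (norm b)\<^sup>2"
    unfolding power2_norm_eq_inner
    by (simp add: inner_diff_left inner_diff_right inner_commute)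
  finally have "2 * inner a b \<le> (norm a)\<^sup>2 + (norm b)\<^sup>2" by simp
  then have "t * (2 * inner a b) \<le> t * ((norm a)\<^sup>2 + (norm b)\<^sup>2)"
    using assms by (rule mult_left_mono)
  then show ?thesis unfolding expand by (simp add: algebra_simps)
qed

lemma forward_backward_forward_contraction:
  fixes w y u p a b :: "'a::real_inner"
  assumes resolvent: "w - lam *\<^sub>R a = y + lam *\<^sub>R u"
    and monotone: "r * (norm (y - p))\<^sup>2 \<le> inner (u + b) (y - p)"
    and step: "(lam * norm (b - a))\<^sup>2 \<le> mu * (norm (w - y))\<^sup>2"
    and lam: "l \<le> lam" "0 \<le> l" and r: "0 \<le> r" and mu: "mu \<le> 1"
  shows "(norm (y - lam *\<^sub>R (b - a) - p))\<^sup>2 \<le> (1 - (1/2) * min (1 - mu) (2 * l * r)) * (norm (w - p))\<^sup>2"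
proof -
  define c where "c = min (1 - mu) (2 * l * r)"
  define X where "X = (norm (w - y))\<^sup>2"
  define Y where "Y = (norm (y - p))\<^sup>2"
  define W where "W = (norm (w - p))\<^sup>2"
  have "w - p = (y - p) + lam *\<^sub>R (u + a)" and "w - y = lam *\<^sub>R (u + a)"
    using resolvent by (simp_all add: algebra_simps)
  then have expand: "(norm (y - lam *\<^sub>R (b - a) - p))\<^sup>2
      = W - X + (lam * norm (b - a))\<^sup>2 - 2 * lam * inner (u + b) (y - p)"
    unfolding W_def X_def power2_norm_eq_inner power_mult_distrib
    by (simp add: inner_add_left inner_add_right inner_diff_left inner_diff_right
        inner_commute algebra_simps power2_eq_square)
  have "c * Y \<le> 2 * lam * (r * Y)"
  proof -
    have "c \<le> 2 * lam * r" unfolding c_def using lam r by (smt (verit) mult_right_mono)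
    then show ?thesis unfolding Y_def by (smt (verit) mult_right_mono mult.assoc zero_le_power2)
  qed
  also have "\<dots> \<le> 2 * lam * inner (u + b) (y - p)"
    using mult_left_mono[OF monotone, of "2 * lam"] lam unfolding Y_def by simp
  finally have "(norm (y - lam *\<^sub>R (b - a) - p))\<^sup>2 \<le> W - (1 - mu) * X - c * Y"
    unfolding expand using step unfolding X_def by (simp add: algebra_simps)
  also have "\<dots> \<le> W - c * (X + Y)"
    using mult_right_mono[of c "1 - mu" X] unfolding c_def X_def by (simp add: algebra_simps)
  also have "\<dots> \<le> (1 - (1/2) * c) * W"
  proof -
    have "W \<le> 2 * X + 2 * Y" unfolding W_def X_def Y_def by (rule norm_diff_sq_le)
    moreover have "0 \<le> c" unfolding c_def using lam r mu by simp
    ultimately have "c * (W / 2) \<le> c * (X + Y)" by (intro mult_left_mono) auto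
    then show ?thesis by (simp add: algebra_simps)
  qed
  finally show ?thesis unfolding W_def c_def .
qed

lemma norm_extrapolation_sq:
  fixes a b p :: "'a::real_inner"
  shows "(norm (a + c *\<^sub>R (a - b) - p))\<^sup>2
    = (1 + c) * (norm (a - p))\<^sup>2 - c * (norm (b - p))\<^sup>2 + c * (1 + c) * (norm (a - b))\<^sup>2"
proof -
  have "a + c *\<^sub>R (a - b) - p = (1 - (- c)) *\<^sub>R (a - p) + (- c) *\<^sub>R (b - p)"
    by (simp add: algebra_simps)
  then show ?thesis
    using norm_convex_combination_sq[of "- c" "a - p" "b - p"] by (simp add: algebra_simps)
qed

lemma inertial_step_estimate:
  fixes x x' x'' p v :: "'a::real_inner"
  assumes relaxed: "x'' = (1 - h) *\<^sub>R (x + b *\<^sub>R (x - x')) + h *\<^sub>R v"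
    and contraction: "(norm (v - p))\<^sup>2 \<le> tau * (norm (x + a *\<^sub>R (x - x') - p))\<^sup>2"
    and h: "0 < h" "h < 1" and b: "0 \<le> b"
  shows "(norm (x'' - p))\<^sup>2 + (1 - h) / h * (1 - b) * (norm (x'' - x))\<^sup>2
    \<le> ((1 - h) * (1 + b) + h * tau * (1 + a)) * (norm (x - p))\<^sup>2
      + ((1 - h) * b * (1 + b) + h * tau * a * (1 + a) + (1 - h) / h * (b - b\<^sup>2)) * (norm (x - x'))\<^sup>2
      - ((1 - h) * b + h * tau * a) * (norm (x' - p))\<^sup>2"
proof -
  define z where "z = x + b *\<^sub>R (x - x')"
  define E where "E = (1 - h) / h"
  have "x'' - p = (1 - h) *\<^sub>R (z - p) + h *\<^sub>R (v - p)"
    unfolding relaxed z_def by (simp add: algebra_simps)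
  then have convex: "(norm (x'' - p))\<^sup>2
      = (1 - h) * (norm (z - p))\<^sup>2 + h * (norm (v - p))\<^sup>2 - h * (1 - h) * (norm (v - z))\<^sup>2"
    using norm_convex_combination_sq[of h "z - p" "v - p"] by (simp add: norm_minus_commute)
  have "x'' - z = h *\<^sub>R (v - z)" unfolding relaxed z_def by (simp add: algebra_simps)
  then have "(norm (x'' - z))\<^sup>2 = h\<^sup>2 * (norm (v - z))\<^sup>2"
    using h by (simp add: power_mult_distrib)
  then have "h * (1 - h) * (norm (v - z))\<^sup>2 = E * (norm (x'' - z))\<^sup>2"
    using h unfolding E_def by (simp add: field_simps power2_eq_square)
  also have "\<dots> \<ge> E * ((1 - b) * (norm (x'' - x))\<^sup>2 + (b\<^sup>2 - b) * (norm (x - x'))\<^sup>2)"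
  proof -
    have "x'' - z = (x'' - x) - b *\<^sub>R (x - x')" unfolding z_def by (simp add: algebra_simps)
    then have "(1 - b) * (norm (x'' - x))\<^sup>2 + (b\<^sup>2 - b) * (norm (x - x'))\<^sup>2 \<le> (norm (x'' - z))\<^sup>2"
      using norm_diff_scaleR_sq_ge[OF b, of "x'' - x" "x - x'"] by (simp only:)
    then show ?thesis using h unfolding E_def by (intro mult_left_mono) auto
  qed
  finally have gap: "E * (1 - b) * (norm (x'' - x))\<^sup>2 + E * (b\<^sup>2 - b) * (norm (x - x'))\<^sup>2
      \<le> h * (1 - h) * (norm (v - z))\<^sup>2"
    by (simp add: algebra_simps)
  have "(norm (x'' - p))\<^sup>2 + E * (1 - b) * (norm (x'' - x))\<^sup>2
      \<le> (1 - h) * (norm (z - p))\<^sup>2 + h * (tau * (norm (x + a *\<^sub>R (x - x') - p))\<^sup>2)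
        - E * (b\<^sup>2 - b) * (norm (x - x'))\<^sup>2"
    using convex gap mult_left_mono[OF contraction, of h] h by linarith
  then show ?thesis
    unfolding z_def norm_extrapolation_sq E_def by (simp add: algebra_simps)
qed

lemma zeros_sum_strongly_monotone:
  fixes A :: "'a::real_inner \<Rightarrow> 'a"
  assumes mono: "(strongly_monotone_op r A \<and> monotone_setop B) \<or> (monotone_op A \<and> strongly_monotone_setop r B)"
    and p: "p \<in> zeros_sum A B" and u: "u \<in> B y"
  shows "r * (norm (y - p))\<^sup>2 \<le> inner (u + A y) (y - p)"
proof -
  obtain v where v: "v \<in> B p" "A p + v = 0" using p unfolding zeros_sum_def by blast
  have "v = - A p" using v(2) by (simp add: eq_neg_iff_add_eq_0 add.commute)
  then have split: "inner (u + A y) (y - p) = inner (u - v) (y - p) + inner (A y - A p) (y - p)"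
    by (simp add: inner_diff_left inner_add_left)
  from mono show ?thesis
  proof (elim disjE conjE)
    assume "strongly_monotone_op r A" "monotone_setop B"
    then have "r * (norm (y - p))\<^sup>2 \<le> inner (A y - A p) (y - p)" "0 \<le> inner (u - v) (y - p)"
      using u v(1) unfolding strongly_monotone_op_def monotone_setop_def by auto
    then show ?thesis unfolding split by linarith
  next
    assume "monotone_op A" "strongly_monotone_setop r B"
    then have "0 \<le> inner (A y - A p) (y - p)" "r * (norm (y - p))\<^sup>2 \<le> inner (u - v) (y - p)"
      using u v(1) unfolding monotone_op_def strongly_monotone_setop_def by auto
    then show ?thesis unfolding split by linarith
  qed
qed

lemma convergent_if_le_add_summable:
  fixes l p :: "nat \<Rightarrow> real"
  assumes bdd: "\<And>n. c \<le> l n"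
    and step: "\<And>n. l (Suc n) \<le> l n + p n"
    and p: "summable p" "\<And>n. 0 \<le> p n"
  shows "convergent l"
proof -
  define g where "g n = l n - (\<Sum>i<n. p i)" for n
  have "decseq g"
    using step by (intro decseq_SucI) (simp add: g_def algebra_simps)
  moreover have "c - suminf p \<le> g n" for n
    using bdd[of n] sum_le_suminf[OF p(1), of "{..<n}"] p(2) unfolding g_def by simp
  ultimately obtain G where "g \<longlonglongrightarrow> G" using decseq_convergent by blast
  then have "(\<lambda>n. g n + (\<Sum>i<n. p i)) \<longlonglongrightarrow> G + suminf p"
    using summable_LIMSEQ[OF p(1)] by (rule tendsto_add)
  then show ?thesis unfolding g_def convergent_def by auto
qed

lemma linear_rate_if_eventually_contracting:
  fixes a \<Phi> :: "nat \<Rightarrow> real"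
  assumes nonneg: "\<And>n. 0 \<le> a n"
    and dominated: "\<And>n. N \<le> n \<Longrightarrow> a n \<le> \<Phi> n"
    and contracting: "\<And>n. N \<le> n \<Longrightarrow> \<Phi> (Suc n) \<le> q * \<Phi> n"
    and q: "0 < q"
  shows "\<exists>K \<ge> 0. \<forall>n. a n \<le> K * q ^ n"
proof -
  have iterate: "\<Phi> (N + k) \<le> q ^ k * \<Phi> N" for k
  proof (induction k)
    case (Suc k)
    have "\<Phi> (N + Suc k) \<le> q * \<Phi> (N + k)" using contracting[of "N + k"] by simp
    also have "\<dots> \<le> q * (q ^ k * \<Phi> N)" using Suc q by (intro mult_left_mono) auto
    finally show ?case by simp
  qed simp
  define K where "K = \<Phi> N / q ^ N + (\<Sum>i<N. a i / q ^ i)"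
  have K1: "0 \<le> \<Phi> N / q ^ N" using dominated[of N] nonneg[of N] q by simp
  have K2: "0 \<le> (\<Sum>i<N. a i / q ^ i)" using nonneg q by (intro sum_nonneg) simp
  have "a n \<le> K * q ^ n" for n
  proof (cases "n < N")
    case True
    then have "a n / q ^ n \<le> (\<Sum>i<N. a i / q ^ i)"
      using nonneg q by (intro member_le_sum) auto
    then have "a n / q ^ n \<le> K" unfolding K_def using K1 by linarith
    then show ?thesis using q by (simp add: divide_le_eq)
  next
    case False
    then obtain k where k: "n = N + k" by (metis le_add_diff_inverse not_less)
    have "a n \<le> q ^ k * \<Phi> N" using dominated[of n] iterate[of k] k by simp
    also have "\<dots> = \<Phi> N / q ^ N * q ^ n" unfolding k using q by (simp add: power_add field_simps)
    also have "\<dots> \<le> K * q ^ n" unfolding K_def using K2 q by (intro mult_right_mono) auto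
    finally show ?thesis .
  qed
  moreover have "0 \<le> K" unfolding K_def using K1 K2 by simp
  ultimately show ?thesis by blast
qed

lemma theta_upper_root:
  fixes tau beta :: real
  defines "t \<equiv> 1/tau - 1 - 2 * beta"
  assumes t: "0 < t" and beta: "0 \<le> beta" "beta \<le> 1"
  shows "t * (theta_upper tau beta)\<^sup>2 + (1 + beta) * theta_upper tau beta + beta - 1 = 0"
proof -
  define D where "D = (1 + beta)\<^sup>2 - 4 * t * (beta - 1)"
  have "4 * t * (beta - 1) \<le> 0" using t beta by (simp add: mult_nonneg_nonpos)
  then have "0 \<le> D" unfolding D_def using zero_le_power2[of "1 + beta"] by linarith
  define S where "S = sqrt D"
  have "S\<^sup>2 = D" using \<open>0 \<le> D\<close> unfolding S_def by simp
  moreover have root: "theta_upper tau beta = (S - (1 + beta)) / (2 * t)"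
    unfolding theta_upper_def S_def D_def t_def by (simp add: algebra_simps)
  ultimately show ?thesis unfolding root
    using t unfolding D_def by (simp add: field_simps power2_eq_square) algebra
qed

locale inertial_parameters =
  fixes tau alpha beta theta :: real
  assumes tau: "1/2 < tau" "tau < 1"
    and alpha: "0 \<le> alpha" "alpha < (1 - tau) / tau"
    and beta: "0 \<le> beta" "beta < (1/2) * (1/tau - 1)"
    and theta_gt: "(1 - beta) / (1 + alpha - beta) < theta"
      "beta / (1 + beta - tau * (1 + alpha)) < theta"
begin

definition kappa :: real where "kappa = tau * (1 + alpha)"

definition position_rate :: real where "position_rate = 1 + beta - theta * (1 + beta - kappa)"

definition velocity_gap :: real where "velocity_gap = theta\<^sup>2 * (1 - kappa) * (1/tau - 1)"

definition rate :: real where "rate = max position_rate (1 - velocity_gap / (1 - beta))"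

definition lyapunov_weight :: "real \<Rightarrow> real" where "lyapunov_weight h = (1 - h) / h * (1 - beta)"

lemma tau_pos: "0 < tau"
  using tau by simp

lemma alpha_lt: "alpha < 1/tau - 1"
  using alpha tau_pos by (simp add: field_simps)

lemma beta_lt_half: "beta < 1/2"
proof -
  have "1/tau < 2" using tau by (simp add: field_simps)
  then show ?thesis using beta by simp
qed

lemma kappa_lt_one: "kappa < 1"
proof -
  have "kappa < tau * (1 + (1 - tau) / tau)" unfolding kappa_def using alpha tau_pos by simp
  also have "\<dots> = 1" using tau_pos by (simp add: field_simps)
  finally show ?thesis .
qed

lemma theta_pos: "0 < theta"
proof -
  have "0 < (1 - beta) / (1 + alpha - beta)" using alpha beta_lt_half by simp
  then show ?thesis using theta_gt by linarith
qed

lemma theta_upper_quadratic_nonpos: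
  assumes "0 \<le> h" "h \<le> theta_upper tau beta"
  shows "(1/tau - 1 - 2 * beta) * h\<^sup>2 + (1 + beta) * h + beta - 1 \<le> 0"
proof -
  have t: "0 < 1/tau - 1 - 2 * beta" using beta by simp
  have "h\<^sup>2 \<le> (theta_upper tau beta)\<^sup>2" using assms by (intro power_mono) auto
  then have "(1/tau - 1 - 2 * beta) * h\<^sup>2 \<le> (1/tau - 1 - 2 * beta) * (theta_upper tau beta)\<^sup>2"
    using t by simp
  moreover have "(1 + beta) * h \<le> (1 + beta) * theta_upper tau beta" using assms beta by simp
  ultimately show ?thesis
    using theta_upper_root[OF t] beta beta_lt_half by linarith
qed

lemma lt_one_if_le_theta_upper:
  assumes "0 \<le> h" "h \<le> theta_upper tau beta"
  shows "h < 1"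
proof (rule ccontr)
  define t where "t = 1/tau - 1 - 2 * beta"
  assume "\<not> h < 1"
  then have "t \<le> t * h\<^sup>2" "1 + beta \<le> (1 + beta) * h"
    using beta unfolding t_def by (simp_all add: one_le_power)
  moreover have "0 < t" using beta unfolding t_def by simp
  ultimately show False
    using theta_upper_quadratic_nonpos[OF assms] beta unfolding t_def by linarith
qed

lemma relaxation_lower_bounds:
  assumes "theta \<le> h"
  shows "1 - beta < h * (1 + alpha - beta)" "beta < h * (1 + beta - kappa)"
proof -
  have "0 < 1 + alpha - beta" "0 < 1 + beta - kappa" using alpha beta_lt_half kappa_lt_one beta by auto
  then have "1 - beta < theta * (1 + alpha - beta)" "beta < theta * (1 + beta - kappa)"
    using theta_gt unfolding kappa_def by (simp_all add: divide_less_eq mult.commute)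
  then show "1 - beta < h * (1 + alpha - beta)" "beta < h * (1 + beta - kappa)"
    using assms \<open>0 < 1 + alpha - beta\<close> \<open>0 < 1 + beta - kappa\<close>
    by (smt (verit) mult_right_mono)+
qed

lemma position_coeff_le:
  assumes h: "theta \<le> h" "h \<le> theta_upper tau beta"
    and a: "0 \<le> a" "a \<le> alpha" and b: "0 \<le> b" "b \<le> beta"
  shows "(1 - h) * (1 + b) + h * tau * (1 + a) \<le> position_rate"
proof -
  have "h < 1" using h theta_pos by (intro lt_one_if_le_theta_upper) auto
  then have "(1 - h) * (1 + b) \<le> (1 - h) * (1 + beta)" using b by simp
  moreover have "h * tau * (1 + a) \<le> h * kappa"
    unfolding kappa_def using h theta_pos tau_pos a by simp
  moreover have "theta * (1 + beta - kappa) \<le> h * (1 + beta - kappa)"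
    using h kappa_lt_one beta by (intro mult_right_mono) auto
  ultimately show ?thesis unfolding position_rate_def by (simp add: algebra_simps)
qed

lemma velocity_coeff_extremal:
  assumes h: "theta \<le> h" "h \<le> theta_upper tau beta"
  shows "h * (1 - h) * beta * (1 + beta) + h\<^sup>2 * kappa * alpha + (1 - h) * beta * (1 - beta)
    \<le> (1 - h) * ((1 - beta) - velocity_gap)"
proof -
  define s where "s = 1/tau - 1"
  define t where "t = s - 2 * beta"
  have h0: "0 < h" and h1: "h < 1" using h theta_pos lt_one_if_le_theta_upper by auto
  have s0: "0 < s" "s < 1" using tau unfolding s_def by (auto simp: field_simps)
  have relaxed_beta: "beta * (1 - h) \<le> h * (1 - kappa)"
    using relaxation_lower_bounds(2)[OF h(1)] by (simp add: algebra_simps)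
  have relaxed_one: "(1 - h) * (1 - beta) \<le> h"
  proof -
    have "h * (1 + alpha - beta) \<le> h * (2 - beta)" using alpha_lt s0 h0 unfolding s_def by simp
    then show ?thesis using relaxation_lower_bounds(1)[OF h(1)] by (simp add: algebra_simps)
  qed
  have quadratic: "0 \<le> 1 - beta - (1 + beta) * h - t * h\<^sup>2"
    using theta_upper_quadratic_nonpos[of h] h0 h unfolding t_def s_def by (simp add: algebra_simps)
  have extrapolation: "0 \<le> h\<^sup>2 * (s - kappa * alpha) - h\<^sup>2 * ((1 - kappa) * (1 + s))"
  proof -
    have "s - kappa * alpha - (1 - kappa) * (1 + s) = alpha * (1 - kappa)"
      unfolding s_def kappa_def using tau_pos by (simp add: field_simps)
    moreover have "0 \<le> alpha * (1 - kappa)" using alpha kappa_lt_one by simp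
    ultimately have "(1 - kappa) * (1 + s) \<le> s - kappa * alpha" by linarith
    then show ?thesis by (simp add: mult_left_mono)
  qed
  have cross: "0 \<le> h\<^sup>2 * (1 - kappa) - (1 - h)\<^sup>2 * beta * (1 - beta)"
  proof -
    have "h * (beta * (1 - h)) \<le> h\<^sup>2 * (1 - kappa)"
      using mult_left_mono[OF relaxed_beta, of h] h0 by (simp add: power2_eq_square mult.assoc)
    moreover have "((1 - h) * (1 - beta)) * (beta * (1 - h)) \<le> h * (beta * (1 - h))"
      using relaxed_one beta h1 by (intro mult_right_mono) auto
    ultimately show ?thesis by (simp add: power2_eq_square algebra_simps)
  qed
  have gap: "0 \<le> h\<^sup>2 * (1 - kappa) * s - velocity_gap"
  proof -
    have "theta\<^sup>2 \<le> h\<^sup>2" using h theta_pos by (intro power_mono) auto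
    then have "theta\<^sup>2 * ((1 - kappa) * s) \<le> h\<^sup>2 * ((1 - kappa) * s)" using kappa_lt_one s0 by (intro mult_right_mono) auto
    then show ?thesis unfolding velocity_gap_def s_def by (simp add: mult.assoc)
  qed
  have "0 \<le> velocity_gap - (1 - h) * velocity_gap"
    using theta_pos kappa_lt_one s0 h0 h1 unfolding velocity_gap_def s_def by simp
  \<comment> \<open>The gap splits into five terms, each nonnegative by one of the constraints on the parameters.\<close>
  moreover have "(1 - h) * ((1 - beta) - velocity_gap)
      - (h * (1 - h) * beta * (1 + beta) + h\<^sup>2 * kappa * alpha + (1 - h) * beta * (1 - beta))
    = (1 - beta - (1 + beta) * h - t * h\<^sup>2) + (h\<^sup>2 * (s - kappa * alpha) - h\<^sup>2 * ((1 - kappa) * (1 + s)))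
      + (h\<^sup>2 * (1 - kappa) - (1 - h)\<^sup>2 * beta * (1 - beta)) + (h\<^sup>2 * (1 - kappa) * s - velocity_gap)
      + (velocity_gap - (1 - h) * velocity_gap)"
    unfolding t_def by (simp add: algebra_simps power2_eq_square)
  ultimately show ?thesis using quadratic extrapolation cross gap by linarith
qed

lemma velocity_coeff_le:
  assumes h: "theta \<le> h" "h \<le> theta_upper tau beta"
    and a: "0 \<le> a" "a \<le> alpha" and b: "0 \<le> b" "b \<le> beta"
  shows "h * b * (1 + b) + h\<^sup>2 * tau * a * (1 + a) / (1 - h) + b * (1 - b) \<le> (1 - beta) - velocity_gap"
proof -
  have h0: "0 < h" and h1: "h < 1" using h theta_pos lt_one_if_le_theta_upper by auto
  have "h * b * (1 + b) \<le> h * beta * (1 + beta)"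
    using h0 b mult_mono[of b beta "1 + b" "1 + beta"] by (simp add: mult.assoc)
  moreover have "h\<^sup>2 * tau * a * (1 + a) / (1 - h) \<le> h\<^sup>2 * kappa * alpha / (1 - h)"
  proof -
    have "a * (1 + a) \<le> alpha * (1 + alpha)" using a by (intro mult_mono) auto
    then have "h\<^sup>2 * tau * (a * (1 + a)) \<le> h\<^sup>2 * tau * (alpha * (1 + alpha))"
      using tau_pos by (intro mult_left_mono) auto
    then show ?thesis unfolding kappa_def using h1 by (intro divide_right_mono) (auto simp: algebra_simps)
  qed
  moreover have "b * (1 - b) \<le> beta * (1 - beta)"
  proof -
    have "0 \<le> (beta - b) * (1 - beta - b)" using b beta_lt_half by simp
    then show ?thesis by (simp add: algebra_simps)
  qed
  moreover have "h * beta * (1 + beta) + h\<^sup>2 * kappa * alpha / (1 - h) + beta * (1 - beta)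
      \<le> (1 - beta) - velocity_gap"
  proof -
    have "(h * beta * (1 + beta) + h\<^sup>2 * kappa * alpha / (1 - h) + beta * (1 - beta)) * (1 - h)
        = h * (1 - h) * beta * (1 + beta) + h\<^sup>2 * kappa * alpha + (1 - h) * beta * (1 - beta)"
      using h1 by (simp add: field_simps)
    also have "\<dots> \<le> ((1 - beta) - velocity_gap) * (1 - h)"
      using velocity_coeff_extremal[OF h] by (simp add: mult.commute)
    finally show ?thesis using h1 by simp
  qed
  ultimately show ?thesis by linarith
qed

lemma rate_bounds:
  assumes "theta \<le> theta_upper tau beta"
  shows "0 < rate" "rate < 1"
proof -
  have "theta < 1" using assms theta_pos by (intro lt_one_if_le_theta_upper) auto
  then have "theta * (1 + beta - kappa) < 1 + beta - kappa"
    using kappa_lt_one beta by simp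
  moreover have "0 < kappa" unfolding kappa_def using tau_pos alpha by simp
  ultimately have "0 < position_rate" unfolding position_rate_def by simp
  moreover have "position_rate < 1"
    using relaxation_lower_bounds(2)[of theta] unfolding position_rate_def by simp
  moreover have "0 < 1/tau - 1" using tau by (simp add: field_simps)
  then have "0 < velocity_gap"
    using theta_pos kappa_lt_one unfolding velocity_gap_def by simp
  then have "1 - velocity_gap / (1 - beta) < 1" using beta_lt_half by simp
  ultimately show "0 < rate" "rate < 1" unfolding rate_def by auto
qed

lemma lyapunov_weight_antimono:
  assumes "0 < h'" "h' \<le> h"
  shows "lyapunov_weight h \<le> lyapunov_weight h'"
proof -
  have "(1 - h) / h \<le> (1 - h') / h'"
    using assms by (simp add: frac_le diff_divide_distrib)
  then show ?thesis unfolding lyapunov_weight_def using beta_lt_half by (intro mult_right_mono) auto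
qed

lemma lyapunov_step:
  fixes x x' x'' p v :: "'a::real_inner"
  assumes relaxed: "x'' = (1 - h) *\<^sub>R (x + b *\<^sub>R (x - x')) + h *\<^sub>R v"
    and contraction: "(norm (v - p))\<^sup>2 \<le> tau * (norm (x + a *\<^sub>R (x - x') - p))\<^sup>2"
    and h: "theta \<le> h'" "h' \<le> h" "h \<le> theta_upper tau beta"
    and a: "0 \<le> a" "a \<le> alpha" and b: "0 \<le> b" "b \<le> beta"
  shows "(norm (x'' - p))\<^sup>2 + lyapunov_weight h * (norm (x'' - x))\<^sup>2
    \<le> rate * ((norm (x - p))\<^sup>2 + lyapunov_weight h' * (norm (x - x'))\<^sup>2)"
proof -
  define E where "E = (1 - h) / h"
  have h0: "0 < h" and h1: "h < 1" and h'0: "0 < h'"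
    using h theta_pos lt_one_if_le_theta_upper by auto
  have rate: "0 < rate" "rate < 1" using h rate_bounds by auto
  have E0: "0 \<le> E" unfolding E_def using h0 h1 by simp
  have weight_le: "lyapunov_weight h \<le> E * (1 - b)"
    unfolding lyapunov_weight_def E_def[symmetric] using E0 b by (intro mult_left_mono) auto
  have velocity: "(1 - h) * b * (1 + b) + h * tau * a * (1 + a) + E * (b - b\<^sup>2)
      \<le> rate * lyapunov_weight h'"
  proof -
    have "(1 - h) * b * (1 + b) + h * tau * a * (1 + a) + E * (b - b\<^sup>2)
        = E * (h * b * (1 + b) + h\<^sup>2 * tau * a * (1 + a) / (1 - h) + b * (1 - b))"
      unfolding E_def using h0 h1 by (simp add: field_simps power2_eq_square)
    also have "\<dots> \<le> E * ((1 - beta) - velocity_gap)"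
      using velocity_coeff_le[OF order_trans[OF h(1,2)] h(3) a b] E0 by (intro mult_left_mono)
    also have "\<dots> = (1 - velocity_gap / (1 - beta)) * lyapunov_weight h"
      unfolding lyapunov_weight_def E_def using beta_lt_half h0 by (simp add: field_simps)
    also have "\<dots> \<le> rate * lyapunov_weight h'"
    proof (rule mult_mono)
      show "1 - velocity_gap / (1 - beta) \<le> rate" unfolding rate_def by simp
      show "0 \<le> lyapunov_weight h" unfolding lyapunov_weight_def using h0 h1 beta_lt_half by simp
    qed (use lyapunov_weight_antimono[OF h'0 h(2)] rate in auto)
    finally show ?thesis .
  qed
  have position: "(1 - h) * (1 + b) + h * tau * (1 + a) \<le> rate"
    using position_coeff_le[OF order_trans[OF h(1,2)] h(3) a b] unfolding rate_def by simp
  have "0 \<le> ((1 - h) * b + h * tau * a) * (norm (x' - p))\<^sup>2"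
    using h0 h1 a b tau_pos by simp
  moreover have "lyapunov_weight h * (norm (x'' - x))\<^sup>2 \<le> E * (1 - b) * (norm (x'' - x))\<^sup>2"
    using weight_le by (simp add: mult_right_mono)
  moreover have "((1 - h) * (1 + b) + h * tau * (1 + a)) * (norm (x - p))\<^sup>2 \<le> rate * (norm (x - p))\<^sup>2"
    using position by (simp add: mult_right_mono)
  moreover have "((1 - h) * b * (1 + b) + h * tau * a * (1 + a) + E * (b - b\<^sup>2)) * (norm (x - x'))\<^sup>2
      \<le> rate * lyapunov_weight h' * (norm (x - x'))\<^sup>2"
    using velocity by (simp add: mult_right_mono)
  ultimately show ?thesis
    using inertial_step_estimate[OF relaxed contraction h0 h1 b(1)] unfolding E_def
    by (simp add: algebra_simps)
qed

end

locale inertial_tseng_algorithm =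
  fixes A :: "'a::real_inner \<Rightarrow> 'a"
    and B :: "'a \<Rightarrow> 'a set"
    and x w z y :: "nat \<Rightarrow> 'a"
    and lam alpha_n beta_n theta_n mu_n p_n :: "nat \<Rightarrow> real"
    and mu L r alpha beta theta :: real
  assumes L_pos: "L > 0" and r_pos: "r > 0"
    and ops: "(L-lipschitz_on UNIV A \<and> strongly_monotone_op r A \<and> maximal_monotone B)
            \<or> (L-lipschitz_on UNIV A \<and> monotone_op A \<and> maximal_monotone B \<and> strongly_monotone_setop r B)"
    and mu: "0 < mu" "mu < 1"
    and lam1: "lam 1 > 0"
    and mu_n_nonneg: "\<And>n. mu_n n \<ge> 0"
    and p_n_nonneg: "\<And>n. p_n n \<ge> 0"
    and w_def: "\<And>n. n \<ge> 1 \<Longrightarrow> w n = x n + alpha_n n *\<^sub>R (x n - x (n - 1))"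
    and z_def: "\<And>n. n \<ge> 1 \<Longrightarrow> z n = x n + beta_n n *\<^sub>R (x n - x (n - 1))"
    and y_def: "\<And>n. n \<ge> 1 \<Longrightarrow> is_resolvent_value (lam n) B (w n - lam n *\<^sub>R A (w n)) (y n)"
    and lam_upd: "\<And>n. n \<ge> 1 \<Longrightarrow> lam (Suc n) =
        (if A (w n) \<noteq> A (y n)
         then min ((mu_n n + mu) * norm (w n - y n) / norm (A (w n) - A (y n))) (lam n + p_n n)
         else lam n + p_n n)"
    and no_stop: "\<And>n. n \<ge> 1 \<Longrightarrow> w n \<noteq> y n"
    and x_upd: "\<And>n. n \<ge> 1 \<Longrightarrow> x (Suc n) =
        (1 - theta_n n) *\<^sub>R z n + theta_n n *\<^sub>R (y n - lam n *\<^sub>R (A (y n) - A (w n)))"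
    and c1: "\<And>n. n \<ge> 1 \<Longrightarrow> 0 \<le> beta_n n \<and> beta_n n \<le> beta"
    and beta_bd: "beta < (1/2) * (1 / tau_param mu L (lam 1) r - 1)"
    and c2: "\<And>n. n \<ge> 1 \<Longrightarrow> 0 \<le> alpha_n n \<and> alpha_n n \<le> alpha"
    and alpha_bd: "alpha < (1 - tau_param mu L (lam 1) r) / tau_param mu L (lam 1) r"
    and theta_lb: "max ((1 - beta) / (1 + alpha - beta))
                       (beta / (1 + beta - tau_param mu L (lam 1) r * (1 + alpha))) < theta"
    and c3: "\<And>n. n \<ge> 1 \<Longrightarrow> theta \<le> theta_n n \<and> theta_n n \<le> theta_n (Suc n)
                  \<and> theta_n n \<le> theta_upper (tau_param mu L (lam 1) r) beta"
    and p_summable: "summable p_n"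
    and mu_n_lim: "mu_n \<longlonglongrightarrow> 0"
begin

lemma lam_hat_pos: "0 < lam_hat mu L (lam 1)"
  unfolding lam_hat_def using mu L_pos lam1 by simp

lemma tau_param_bounds: "1/2 < tau_param mu L (lam 1) r" "tau_param mu L (lam 1) r < 1"
proof -
  have "0 < min (1 - mu) (2 * lam_hat mu L (lam 1) * r)" "min (1 - mu) (2 * lam_hat mu L (lam 1) * r) < 1"
    using mu lam_hat_pos r_pos by auto
  then show "1/2 < tau_param mu L (lam 1) r" "tau_param mu L (lam 1) r < 1"
    unfolding tau_param_def by simp_all
qed

sublocale inertial_parameters "tau_param mu L (lam 1) r" alpha beta theta
  using tau_param_bounds beta_bd alpha_bd theta_lb c1[of 1] c2[of 1]
  by unfold_locales auto

lemma lam_ge_lam_hat: "1 \<le> n \<Longrightarrow> lam_hat mu L (lam 1) \<le> lam n"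
proof (induction n rule: nat_induct_at_least)
  case base
  then show ?case unfolding lam_hat_def by simp
next
  case (Suc n)
  have "lam_hat mu L (lam 1) \<le> lam n + p_n n" using Suc.IH p_n_nonneg[of n] by linarith
  moreover have "lam_hat mu L (lam 1) \<le> (mu_n n + mu) * norm (w n - y n) / norm (A (w n) - A (y n))"
    if "A (w n) \<noteq> A (y n)"
  proof -
    have "norm (A (w n) - A (y n)) \<le> L * norm (w n - y n)"
      using lipschitz_onD[of L UNIV A] ops by (auto simp: dist_norm)
    moreover have "0 < norm (w n - y n)" using no_stop[OF Suc.hyps] by simp
    ultimately have "mu / L \<le> mu * norm (w n - y n) / norm (A (w n) - A (y n))"
      using that mu L_pos by (simp add: field_simps mult_left_mono)
    also have "\<dots> \<le> (mu_n n + mu) * norm (w n - y n) / norm (A (w n) - A (y n))"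
      using mu_n_nonneg[of n] by (intro divide_right_mono mult_right_mono) auto
    finally show ?thesis unfolding lam_hat_def by linarith
  qed
  ultimately show ?case using lam_upd[OF Suc.hyps] by simp
qed

lemma lam_Suc_mult_norm_le:
  assumes "1 \<le> n"
  shows "lam (Suc n) * norm (A (w n) - A (y n)) \<le> (mu_n n + mu) * norm (w n - y n)"
proof (cases "A (w n) = A (y n)")
  case False
  then have "lam (Suc n) \<le> (mu_n n + mu) * norm (w n - y n) / norm (A (w n) - A (y n))"
    using lam_upd[OF assms] by simp
  then show ?thesis using False by (simp add: le_divide_eq)
qed (use mu_n_nonneg[of n] mu in simp)

lemma eventually_stepsize_ratio_lt: "eventually (\<lambda>n. ((mu_n n + mu) * lam n / lam (Suc n))\<^sup>2 < mu) sequentially"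
proof -
  have bdd: "lam_hat mu L (lam 1) \<le> lam (Suc n)" for n using lam_ge_lam_hat by simp
  have "convergent (\<lambda>n. lam (Suc n))"
  proof (rule convergent_if_le_add_summable[OF bdd])
    show "lam (Suc (Suc n)) \<le> lam (Suc n) + p_n (Suc n)" for n using lam_upd[of "Suc n"] by simp
  qed (use summable_ignore_initial_segment[OF p_summable, of 1] p_n_nonneg in auto)
  then obtain l where "(\<lambda>n. lam (Suc n)) \<longlonglongrightarrow> l" unfolding convergent_def by blast
  then have lim: "lam \<longlonglongrightarrow> l" "(\<lambda>n. lam (Suc n)) \<longlonglongrightarrow> l" by (simp_all add: LIMSEQ_imp_Suc)
  have "0 < l" using LIMSEQ_le_const[OF lim(2), of "lam_hat mu L (lam 1)"] bdd lam_hat_pos by force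
  then have "(\<lambda>n. ((mu_n n + mu) * lam n / lam (Suc n))\<^sup>2) \<longlonglongrightarrow> ((0 + mu) * l / l)\<^sup>2"
    by (intro tendsto_intros mu_n_lim lim) simp
  moreover have "((0 + mu) * l / l)\<^sup>2 < mu" using \<open>0 < l\<close> mu by (simp add: power2_eq_square)
  ultimately show ?thesis by (rule order_tendstoD(2))
qed

lemma eventually_contraction:
  assumes p: "p \<in> zeros_sum A B"
  shows "eventually (\<lambda>n. (norm (y n - lam n *\<^sub>R (A (y n) - A (w n)) - p))\<^sup>2
    \<le> tau_param mu L (lam 1) r * (norm (w n - p))\<^sup>2) sequentially"
  using eventually_stepsize_ratio_lt eventually_ge_at_top[of 1]
proof eventually_elim
  case (elim n)
  obtain u where u: "u \<in> B (y n)" "w n - lam n *\<^sub>R A (w n) = y n + lam n *\<^sub>R u"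
    using y_def[OF elim(2)] unfolding is_resolvent_value_def by blast
  define \<rho> where "\<rho> = (mu_n n + mu) * lam n / lam (Suc n)"
  have lam_pos: "0 < lam n" "0 < lam (Suc n)"
    using lam_ge_lam_hat[of n] lam_ge_lam_hat[of "Suc n"] lam_hat_pos elim(2) by auto
  have "lam n * norm (A (y n) - A (w n))
      = lam n / lam (Suc n) * (lam (Suc n) * norm (A (w n) - A (y n)))"
    using lam_pos by (simp add: norm_minus_commute)
  also have "\<dots> \<le> lam n / lam (Suc n) * ((mu_n n + mu) * norm (w n - y n))"
    using lam_Suc_mult_norm_le[OF elim(2)] lam_pos by (intro mult_left_mono) auto
  finally have "lam n * norm (A (y n) - A (w n)) \<le> \<rho> * norm (w n - y n)"
    unfolding \<rho>_def by (simp add: field_simps)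
  then have "(lam n * norm (A (y n) - A (w n)))\<^sup>2 \<le> \<rho>\<^sup>2 * (norm (w n - y n))\<^sup>2"
    using lam_pos by (metis power_mono power_mult_distrib mult_nonneg_nonneg norm_ge_zero less_imp_le)
  also have "\<dots> \<le> mu * (norm (w n - y n))\<^sup>2"
    using elim(1) unfolding \<rho>_def by (intro mult_right_mono) auto
  finally have step: "(lam n * norm (A (y n) - A (w n)))\<^sup>2 \<le> mu * (norm (w n - y n))\<^sup>2" .
  have "r * (norm (y n - p))\<^sup>2 \<le> inner (u + A (y n)) (y n - p)"
    using zeros_sum_strongly_monotone[OF _ p u(1)] ops unfolding maximal_monotone_def by blast
  from forward_backward_forward_contraction[OF u(2) this step]
  show ?case
    using lam_ge_lam_hat[OF elim(2)] lam_hat_pos r_pos mu unfolding tau_param_def by simp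
qed

definition lyapunov :: "'a \<Rightarrow> nat \<Rightarrow> real" where
  "lyapunov p n = (norm (x n - p))\<^sup>2 + lyapunov_weight (theta_n (n - 1)) * (norm (x n - x (n - 1)))\<^sup>2"

lemma norm_sq_le_lyapunov:
  assumes "2 \<le> n"
  shows "(norm (x n - p))\<^sup>2 \<le> lyapunov p n"
proof -
  have "theta \<le> theta_n (n - 1)" "theta_n (n - 1) \<le> theta_upper (tau_param mu L (lam 1) r) beta"
    using c3[of "n - 1"] assms by auto
  then have "0 < theta_n (n - 1)" "theta_n (n - 1) < 1"
    using theta_pos lt_one_if_le_theta_upper by auto
  then have "0 \<le> lyapunov_weight (theta_n (n - 1))"
    unfolding lyapunov_weight_def using beta_lt_half by simp
  then show ?thesis unfolding lyapunov_def by simp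
qed

lemma eventually_lyapunov_decrease:
  assumes "p \<in> zeros_sum A B"
  shows "eventually (\<lambda>n. lyapunov p (Suc n) \<le> rate * lyapunov p n) sequentially"
  using eventually_contraction[OF assms] eventually_ge_at_top[of 2]
proof eventually_elim
  case (elim n)
  then have n: "1 \<le> n" "1 \<le> n - 1" "Suc (n - 1) = n" by auto
  have relaxed: "x (Suc n) = (1 - theta_n n) *\<^sub>R (x n + beta_n n *\<^sub>R (x n - x (n - 1)))
      + theta_n n *\<^sub>R (y n - lam n *\<^sub>R (A (y n) - A (w n)))"
    using x_upd[OF n(1)] z_def[OF n(1)] by simp
  have contraction: "(norm (y n - lam n *\<^sub>R (A (y n) - A (w n)) - p))\<^sup>2
      \<le> tau_param mu L (lam 1) r * (norm (x n + alpha_n n *\<^sub>R (x n - x (n - 1)) - p))\<^sup>2"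
    using elim(1) w_def[OF n(1)] by simp
  have "theta \<le> theta_n (n - 1)" "theta_n (n - 1) \<le> theta_n n"
      "theta_n n \<le> theta_upper (tau_param mu L (lam 1) r) beta"
    using c3[OF n(2)] c3[OF n(1)] n(3) by auto
  moreover have "0 \<le> alpha_n n" "alpha_n n \<le> alpha" "0 \<le> beta_n n" "beta_n n \<le> beta"
    using c1[OF n(1)] c2[OF n(1)] by auto
  ultimately show ?case
    using lyapunov_step[OF relaxed contraction] unfolding lyapunov_def by simp
qed

end

theorem theorem4p2:
  fixes A :: "'a::{real_inner, complete_space} \<Rightarrow> 'a"
    and B :: "'a \<Rightarrow> 'a set"
    and x w z y :: "nat \<Rightarrow> 'a"
    and lam alpha_n beta_n theta_n mu_n p_n :: "nat \<Rightarrow> real"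
    and mu L r alpha beta theta :: real
  assumes Omega_ne: "zeros_sum A B \<noteq> {}"
    and L_pos: "L > 0" and r_pos: "r > 0"
    and ops: "(L-lipschitz_on UNIV A \<and> strongly_monotone_op r A \<and> maximal_monotone B)
            \<or> (L-lipschitz_on UNIV A \<and> monotone_op A \<and> maximal_monotone B \<and> strongly_monotone_setop r B)"
    and mu: "0 < mu" "mu < 1"
    and lam1: "lam 1 > 0"
    and mu_n_nonneg: "\<And>n. mu_n n \<ge> 0"
    and p_n_nonneg: "\<And>n. p_n n \<ge> 0"
    and w_def: "\<And>n. n \<ge> 1 \<Longrightarrow> w n = x n + alpha_n n *\<^sub>R (x n - x (n - 1))"
    and z_def: "\<And>n. n \<ge> 1 \<Longrightarrow> z n = x n + beta_n n *\<^sub>R (x n - x (n - 1))"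
    and y_def: "\<And>n. n \<ge> 1 \<Longrightarrow> is_resolvent_value (lam n) B (w n - lam n *\<^sub>R A (w n)) (y n)"
    and lam_upd: "\<And>n. n \<ge> 1 \<Longrightarrow> lam (Suc n) =
        (if A (w n) \<noteq> A (y n)
         then min ((mu_n n + mu) * norm (w n - y n) / norm (A (w n) - A (y n))) (lam n + p_n n)
         else lam n + p_n n)"
    and no_stop: "\<And>n. n \<ge> 1 \<Longrightarrow> w n \<noteq> y n"
    and x_upd: "\<And>n. n \<ge> 1 \<Longrightarrow> x (Suc n) =
        (1 - theta_n n) *\<^sub>R z n + theta_n n *\<^sub>R (y n - lam n *\<^sub>R (A (y n) - A (w n)))"
    and c1: "\<And>n. n \<ge> 1 \<Longrightarrow> 0 \<le> beta_n n \<and> beta_n n \<le> beta"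
    and beta_bd: "beta < (1/2) * (1 / tau_param mu L (lam 1) r - 1)"
    and c2: "\<And>n. n \<ge> 1 \<Longrightarrow> 0 \<le> alpha_n n \<and> alpha_n n \<le> alpha"
    and alpha_bd: "alpha < (1 - tau_param mu L (lam 1) r) / tau_param mu L (lam 1) r"
    and theta_lb: "max ((1 - beta) / (1 + alpha - beta))
                       (beta / (1 + beta - tau_param mu L (lam 1) r * (1 + alpha))) < theta"
    and c3: "\<And>n. n \<ge> 1 \<Longrightarrow> theta \<le> theta_n n \<and> theta_n n \<le> theta_n (Suc n)
                  \<and> theta_n n \<le> theta_upper (tau_param mu L (lam 1) r) beta"
    and p_summable: "summable p_n"
    and mu_n_lim: "mu_n \<longlonglongrightarrow> 0"
  shows "\<exists>p \<in> zeros_sum A B. \<exists>q. 0 < q \<and> q < 1 \<and> (\<exists>K \<ge> 0.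
            \<forall>n. (norm (x n - p))\<^sup>2 \<le> K * q ^ n)"
proof -
  interpret inertial_tseng_algorithm A B x w z y lam alpha_n beta_n theta_n mu_n p_n mu L r alpha beta theta
    by unfold_locales (fact assms)+
  obtain p where p: "p \<in> zeros_sum A B" using Omega_ne by blast
  obtain N where N: "\<And>n. N \<le> n \<Longrightarrow> lyapunov p (Suc n) \<le> rate * lyapunov p n"
    using eventually_lyapunov_decrease[OF p] unfolding eventually_sequentially by blast
  have rate: "0 < rate" "rate < 1" using rate_bounds c3[of 1] by auto
  have "\<exists>K \<ge> 0. \<forall>n. (norm (x n - p))\<^sup>2 \<le> K * rate ^ n"
  proof (rule linear_rate_if_eventually_contracting)
    show "(norm (x n - p))\<^sup>2 \<le> lyapunov p n" if "N + 2 \<le> n" for n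
      using norm_sq_le_lyapunov that by simp
    show "lyapunov p (Suc n) \<le> rate * lyapunov p n" if "N + 2 \<le> n" for n
      using N that by simp
  qed (use rate in simp_all)
  then show ?thesis using p rate by blast
qed

end
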